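(* Let $G$ be a cubic bipartite connected graph and $K$ a constant. Then $G$ admits a TSP-tour of length at most $K$ if and only if $G$ admits a $\tfrac12$-tour of length $K$.
   Context: Continuous graph model: for a connected simple graph $G$, each edge $uv$ is viewed as a unit-length interval whose endpoints are the vertices $u,v$. $P(G)$ is the set of all points $p(u,v,\lambda)$ for $uv\in E(G)$, $\lambda\in[0,1]$, where $p(u,v,\lambda)=p(v,u,1-\lambda)$, $p(u,v,0)=u$, $p(u,v,1)=v$. A walk is a finite sequence of points $(p_0,\dots,p_z)$ in which any two consecutive points are distinct and lie on a common edge $uv$, say $p_{i-1}=p(u,v,\lambda)$, $p_i=p(u,v,\mu)$; this step has length $|\lambda-\mu|$ and covers all points of that edge between them. The length of a walk is the sum of the lengths of its steps; $d(p,q)$ is the minimum length of a walk from $p$ to $q$. A tour is a walk with $p_0=p_z$; the points of the tour are all points covered by its steps. For $\delta\ge 0$, a $\delta$-tour is a tour $T$ such that every $p\in P(G)$ has distance at most $\delta$ from some point of $T$. A TSP-tour of $G$ is a closed walk in $G$ (a tour all of whose points $p_i$ are vertices) visiting every vertex of $G$; its length is the number of edge traversals. *)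

theory Defs
  imports Complex_Main
begin

definition simple_graph :: "'a set \<Rightarrow> ('a \<Rightarrow> 'a \<Rightarrow> bool) \<Rightarrow> bool" where
  "simple_graph V E \<longleftrightarrow> finite V \<and> (\<forall>u v. E u v \<longrightarrow> u \<in> V \<and> v \<in> V \<and> u \<noteq> v \<and> E v u)"

definition connected_graph :: "'a set \<Rightarrow> ('a \<Rightarrow> 'a \<Rightarrow> bool) \<Rightarrow> bool" where
  "connected_graph V E \<longleftrightarrow> V \<noteq> {} \<and> (\<forall>u\<in>V. \<forall>v\<in>V. (u, v) \<in> {(x, y). E x y}\<^sup>*)"

definition cubic :: "'a set \<Rightarrow> ('a \<Rightarrow> 'a \<Rightarrow> bool) \<Rightarrow> bool" where
  "cubic V E \<longleftrightarrow> (\<forall>v\<in>V. card {w. E v w} = 3)"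

definition bipartite :: "'a set \<Rightarrow> ('a \<Rightarrow> 'a \<Rightarrow> bool) \<Rightarrow> bool" where
  "bipartite V E \<longleftrightarrow> (\<exists>A. A \<subseteq> V \<and> (\<forall>u v. E u v \<longrightarrow> (u \<in> A \<longleftrightarrow> v \<notin> A)))"

definition tsp_tour :: "'a set \<Rightarrow> ('a \<Rightarrow> 'a \<Rightarrow> bool) \<Rightarrow> 'a list \<Rightarrow> bool" where
  "tsp_tour V E vs \<longleftrightarrow> vs \<noteq> [] \<and> hd vs = last vs
     \<and> (\<forall>i. Suc i < length vs \<longrightarrow> E (vs ! i) (vs ! Suc i)) \<and> V \<subseteq> set vs"

definition tsp_length :: "'a list \<Rightarrow> nat" where
  "tsp_length vs = length vs - 1"

text \<open>Points of P(G): a vertex, or an interior point of an edge, stored canonically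
  as (u, v, lambda) with u < v and 0 < lambda < 1.\<close>

datatype 'a point = Vert 'a | Mid 'a 'a real

definition pt :: "'a::linorder \<Rightarrow> 'a \<Rightarrow> real \<Rightarrow> 'a point" where
  "pt u v l = (if l \<le> 0 then Vert u else if 1 \<le> l then Vert v
               else if u < v then Mid u v l else Mid v u (1 - l))"

definition Pts :: "('a::linorder \<Rightarrow> 'a \<Rightarrow> bool) \<Rightarrow> 'a point set" where
  "Pts E = {pt u v l | u v l. E u v \<and> 0 \<le> l \<and> l \<le> 1}"

text \<open>A step (u, v, lambda, mu) goes from p(u,v,lambda) to p(u,v,mu) along edge uv.
  A walk (p0,...,pz) is represented by its list of steps.\<close>

type_synonym 'a step = "'a \<times> 'a \<times> real \<times> real"

definition valid_step :: "('a \<Rightarrow> 'a \<Rightarrow> bool) \<Rightarrow> 'a step \<Rightarrow> bool" where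
  "valid_step E s = (case s of (u, v, l, m) \<Rightarrow>
     E u v \<and> 0 \<le> l \<and> l \<le> 1 \<and> 0 \<le> m \<and> m \<le> 1 \<and> l \<noteq> m)"

definition step_start :: "'a::linorder step \<Rightarrow> 'a point" where
  "step_start s = (case s of (u, v, l, m) \<Rightarrow> pt u v l)"

definition step_end :: "'a::linorder step \<Rightarrow> 'a point" where
  "step_end s = (case s of (u, v, l, m) \<Rightarrow> pt u v m)"

definition step_len :: "'a step \<Rightarrow> real" where
  "step_len s = (case s of (u, v, l, m) \<Rightarrow> \<bar>l - m\<bar>)"

definition step_cover :: "'a::linorder step \<Rightarrow> 'a point set" where
  "step_cover s = (case s of (u, v, l, m) \<Rightarrow> {pt u v t | t. min l m \<le> t \<and> t \<le> max l m})"

definition is_walk :: "('a::linorder \<Rightarrow> 'a \<Rightarrow> bool) \<Rightarrow> 'a step list \<Rightarrow> bool" where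
  "is_walk E ss \<longleftrightarrow> (\<forall>s\<in>set ss. valid_step E s)
     \<and> (\<forall>i. Suc i < length ss \<longrightarrow> step_end (ss ! i) = step_start (ss ! Suc i))"

definition walk_from_to :: "('a::linorder \<Rightarrow> 'a \<Rightarrow> bool) \<Rightarrow> 'a step list \<Rightarrow> 'a point \<Rightarrow> 'a point \<Rightarrow> bool" where
  "walk_from_to E ss p q \<longleftrightarrow> is_walk E ss
     \<and> (if ss = [] then p = q else step_start (hd ss) = p \<and> step_end (last ss) = q)"

definition walk_length :: "'a step list \<Rightarrow> real" where
  "walk_length ss = sum_list (map step_len ss)"

definition walk_points :: "'a::linorder step list \<Rightarrow> 'a point set" where
  "walk_points ss = (\<Union>s\<in>set ss. step_cover s)"

definition gdist :: "('a::linorder \<Rightarrow> 'a \<Rightarrow> bool) \<Rightarrow> 'a point \<Rightarrow> 'a point \<Rightarrow> real" where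
  "gdist E p q = Inf {walk_length ss | ss. walk_from_to E ss p q}"

definition is_tour :: "('a::linorder \<Rightarrow> 'a \<Rightarrow> bool) \<Rightarrow> 'a step list \<Rightarrow> bool" where
  "is_tour E ss \<longleftrightarrow> is_walk E ss \<and> (ss \<noteq> [] \<longrightarrow> step_start (hd ss) = step_end (last ss))"

definition delta_tour :: "('a::linorder \<Rightarrow> 'a \<Rightarrow> bool) \<Rightarrow> real \<Rightarrow> 'a step list \<Rightarrow> bool" where
  "delta_tour E \<delta> ss \<longleftrightarrow> is_tour E ss
     \<and> (\<forall>p\<in>Pts E. \<exists>q\<in>walk_points ss. gdist E p q \<le> \<delta>)"

end

(* A TSP-tour of length at most K becomes a 1/2-tour of length exactly K by appending a
   back-and-forth shuttle on one edge: every point lies within 1/2 of an endpoint of its edge.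

   Conversely, let W be the set of vertices visited by a 1/2-tour T of length K.  W is a vertex
   cover, for otherwise T is trapped inside an open edge and misses the midpoint of a neighbouring
   edge.  At an unvisited vertex y let D x be how deep T enters the edge from the neighbour x
   towards y; the two largest depths sum to at least 1, since otherwise the point of the second
   edge at distance (D x1 - D x2)/2 from y is farther than 1/2 from T.  As T is closed it covers
   every depth twice, so it spends length at least 2 on the edges at y.  Rounding T to the
   vertices of W gives a closed walk through W no longer than the part of T inside W, and a
   detour of length 2 to each unvisited vertex completes a TSP-tour of length at most K. *)

theory Submission
  imports Defs
begin

section \<open>Points, walks and potentials\<close>

lemma pt_0 [simp]: "pt u v 0 = Vert u"
  by (simp add: pt_def)

lemma pt_1 [simp]: "pt u v 1 = Vert v"
  by (simp add: pt_def)

lemma pt_swap: "u \<noteq> v \<Longrightarrow> pt u v l = pt v u (1 - l)"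
  by (auto simp: pt_def)

lemma pt_eq_VertD:
  assumes "pt u v l = Vert w" "0 \<le> l" "l \<le> 1"
  shows "(l = 0 \<and> w = u) \<or> (l = 1 \<and> w = v)"
  using assms by (auto simp: pt_def split: if_splits)

lemma pt_is_Vert_iff: "0 \<le> l \<Longrightarrow> l \<le> 1 \<Longrightarrow> (\<exists>w. pt u v l = Vert w) \<longleftrightarrow> l = 0 \<or> l = 1"
  by (auto simp: pt_def)

lemma pt_eq_pt_interiorD:
  assumes "u \<noteq> v" "u' \<noteq> v'" "0 < l" "l < 1" "0 \<le> l'" "l' \<le> 1" "pt u' v' l' = pt u v l"
  shows "(u' = u \<and> v' = v \<and> l' = l) \<or> (u' = v \<and> v' = u \<and> l' = 1 - l)"
  using assms by (auto simp: pt_def split: if_splits)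

lemma pt_in_Pts: "E u v \<Longrightarrow> 0 \<le> l \<Longrightarrow> l \<le> 1 \<Longrightarrow> pt u v l \<in> Pts E"
  unfolding Pts_def by blast

definition undirected :: "('a \<Rightarrow> 'a \<Rightarrow> bool) \<Rightarrow> bool" where
  "undirected E \<longleftrightarrow> (\<forall>x y. E x y \<longrightarrow> x \<noteq> y \<and> E y x)"

lemma undirectedD:
  "undirected E \<Longrightarrow> E x y \<Longrightarrow> x \<noteq> y"
  "undirected E \<Longrightarrow> E x y \<Longrightarrow> E y x"
  by (auto simp: undirected_def)

lemma simple_graph_undirected: "simple_graph V E \<Longrightarrow> undirected E"
  by (auto simp: simple_graph_def undirected_def)

lemma simple_graph_edge_in_V: "simple_graph V E \<Longrightarrow> E u v \<Longrightarrow> u \<in> V \<and> v \<in> V"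
  by (auto simp: simple_graph_def)

definition min_degree_two :: "'a set \<Rightarrow> ('a \<Rightarrow> 'a \<Rightarrow> bool) \<Rightarrow> bool" where
  "min_degree_two V E \<longleftrightarrow> (\<forall>v\<in>V. 2 \<le> card {w. E v w})"

lemma cubic_min_degree_two: "cubic V E \<Longrightarrow> min_degree_two V E"
  by (simp add: cubic_def min_degree_two_def)

lemma min_degree_two_other_neighbour:
  assumes "min_degree_two V E" "v \<in> V"
  shows "\<exists>w. E v w \<and> w \<noteq> z"
proof (rule ccontr)
  assume "\<not> ?thesis"
  then have "card {w. E v w} \<le> card {z}"
    by (intro card_mono) auto
  moreover have "2 \<le> card {w. E v w}"
    using assms by (simp add: min_degree_two_def)
  ultimately show False
    by simp
qed

text \<open>A function on points is given by its values at the vertices and its profile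
  \<open>\<Phi> a b l\<close> on the interior of every edge, read in the stored orientation \<open>a < b\<close>.\<close>

definition point_fun :: "('a \<Rightarrow> real) \<Rightarrow> ('a \<Rightarrow> 'a \<Rightarrow> real \<Rightarrow> real) \<Rightarrow> 'a point \<Rightarrow> real" where
  "point_fun \<nu> \<Phi> r = (case r of Vert w \<Rightarrow> \<nu> w | Mid a b l \<Rightarrow> \<Phi> a b l)"

lemma point_fun_pt:
  assumes "u \<noteq> v" "0 \<le> l" "l \<le> 1"
    and "l = 0 \<Longrightarrow> \<Phi> u v 0 = \<nu> u" and "l = 1 \<Longrightarrow> \<Phi> u v 1 = \<nu> v"
    and "\<Phi> v u (1 - l) = \<Phi> u v l"
  shows "point_fun \<nu> \<Phi> (pt u v l) = \<Phi> u v l"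
  using assms by (auto simp: pt_def point_fun_def)

lemma walk_from_to_Nil [simp]: "walk_from_to E [] p q \<longleftrightarrow> p = q"
  by (simp add: walk_from_to_def is_walk_def)

lemma is_walk_Cons:
  "is_walk E (s # ss) \<longleftrightarrow> valid_step E s \<and> is_walk E ss \<and> (ss \<noteq> [] \<longrightarrow> step_end s = step_start (hd ss))"
  unfolding is_walk_def
  by (cases ss) (auto simp: nth_Cons split: nat.splits)

lemma walk_from_to_Cons:
  "walk_from_to E (s # ss) p q \<longleftrightarrow> valid_step E s \<and> step_start s = p \<and> walk_from_to E ss (step_end s) q"
  by (cases ss) (auto simp: walk_from_to_def is_walk_Cons)

lemma walk_from_to_append:
  "walk_from_to E xs p r \<Longrightarrow> walk_from_to E ys r q \<Longrightarrow> walk_from_to E (xs @ ys) p q"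
  by (induction xs arbitrary: p) (auto simp: walk_from_to_Cons)

lemma walk_length_Nil [simp]: "walk_length [] = 0"
  and walk_length_Cons [simp]: "walk_length (s # ss) = step_len s + walk_length ss"
  and walk_length_append [simp]: "walk_length (xs @ ys) = walk_length xs + walk_length ys"
  by (simp_all add: walk_length_def)

lemma walk_length_nonneg: "0 \<le> walk_length ss"
  unfolding walk_length_def step_len_def by (induction ss) auto

lemma walk_variation:
  fixes g :: "'a::linorder point \<Rightarrow> real"
  assumes "walk_from_to E ss p q"
    and "\<And>s. s \<in> set ss \<Longrightarrow> \<bar>g (step_end s) - g (step_start s)\<bar> \<le> \<omega> s"
  shows "\<bar>g q - g p\<bar> \<le> sum_list (map \<omega> ss)"
  using assms
proof (induction ss arbitrary: p)
  case (Cons s ss)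
  then have "p = step_start s" "walk_from_to E ss (step_end s) q"
    by (simp_all add: walk_from_to_Cons)
  then have "\<bar>g q - g (step_end s)\<bar> \<le> sum_list (map \<omega> ss)" "\<bar>g (step_end s) - g p\<bar> \<le> \<omega> s"
    using Cons.IH Cons.prems(2) by simp_all
  then show ?case
    by simp
qed simp

lemma walk_from_to_appendD:
  assumes "walk_from_to E (xs @ ys) p q" "ys \<noteq> []"
  shows "walk_from_to E xs p (step_start (hd ys)) \<and> walk_from_to E ys (step_start (hd ys)) q"
  using assms
proof (induction xs arbitrary: p)
  case Nil
  then show ?case
    by (simp add: walk_from_to_def is_walk_def)
qed (auto simp: walk_from_to_Cons)

text \<open>All lower bounds on distances below come from potentials that are 1-Lipschitz
  along every edge.\<close>

definition edge_lipschitz :: "('a::linorder \<Rightarrow> 'a \<Rightarrow> bool) \<Rightarrow> ('a point \<Rightarrow> real) \<Rightarrow> bool" where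
  "edge_lipschitz E \<phi> \<longleftrightarrow> (\<forall>u v l m. E u v \<longrightarrow> 0 \<le> l \<longrightarrow> l \<le> 1 \<longrightarrow> 0 \<le> m \<longrightarrow> m \<le> 1 \<longrightarrow>
     \<bar>\<phi> (pt u v m) - \<phi> (pt u v l)\<bar> \<le> \<bar>l - m\<bar>)"

lemma edge_lipschitz_walk:
  assumes "edge_lipschitz E \<phi>" "walk_from_to E ss p q"
  shows "\<bar>\<phi> q - \<phi> p\<bar> \<le> walk_length ss"
  unfolding walk_length_def
proof (rule walk_variation[OF assms(2)])
  fix s assume "s \<in> set ss"
  then have "valid_step E s"
    using assms(2) by (auto simp: walk_from_to_def is_walk_def)
  then show "\<bar>\<phi> (step_end s) - \<phi> (step_start s)\<bar> \<le> step_len s"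
    using assms(1) by (cases s) (auto simp: edge_lipschitz_def valid_step_def step_start_def step_end_def step_len_def)
qed

lemma gdist_le_walk_length: "walk_from_to E ss p q \<Longrightarrow> gdist E p q \<le> walk_length ss"
  unfolding gdist_def by (rule cInf_lower) (auto intro: walk_length_nonneg simp: bdd_below_def)

lemma edge_lipschitz_le_gdist:
  "edge_lipschitz E \<phi> \<Longrightarrow> walk_from_to E ss p q \<Longrightarrow> \<bar>\<phi> q - \<phi> p\<bar> \<le> gdist E p q"
  unfolding gdist_def by (rule cInf_greatest) (auto intro: edge_lipschitz_walk)

lemma edge_lipschitz_point_fun:
  assumes "undirected E"
    and "\<And>u v. E u v \<Longrightarrow> \<Phi> u v 0 = \<nu> u" "\<And>u v. E u v \<Longrightarrow> \<Phi> u v 1 = \<nu> v"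
    and "\<And>u v l. E u v \<Longrightarrow> \<Phi> v u (1 - l) = \<Phi> u v l"
    and "\<And>u v l m. E u v \<Longrightarrow> 0 \<le> l \<Longrightarrow> l \<le> 1 \<Longrightarrow> 0 \<le> m \<Longrightarrow> m \<le> 1 \<Longrightarrow>
           \<bar>\<Phi> u v m - \<Phi> u v l\<bar> \<le> \<bar>l - m\<bar>"
  shows "edge_lipschitz E (point_fun \<nu> \<Phi>)"
  unfolding edge_lipschitz_def
proof (intro allI impI)
  fix u v and l m :: real
  assume uv: "E u v" and "0 \<le> l" "l \<le> 1" "0 \<le> m" "m \<le> 1"
  moreover have "\<And>t. 0 \<le> t \<Longrightarrow> t \<le> 1 \<Longrightarrow> point_fun \<nu> \<Phi> (pt u v t) = \<Phi> u v t"
    using assms(1-4) uv by (intro point_fun_pt) (auto dest: undirectedD)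
  ultimately show "\<bar>point_fun \<nu> \<Phi> (pt u v m) - point_fun \<nu> \<Phi> (pt u v l)\<bar> \<le> \<bar>l - m\<bar>"
    using assms(5) by simp
qed

lemma walk_from_to_rtrancl:
  assumes "(u, w) \<in> {(x, y). E x y}\<^sup>*"
  shows "\<exists>ss. walk_from_to E ss (Vert u) (Vert w)"
  using assms(1)
proof (induction rule: rtrancl_induct)
  case base
  then show ?case
    using walk_from_to_Nil by blast
next
  case (step y z)
  then obtain ss where "walk_from_to E ss (Vert u) (Vert y)"
    by blast
  moreover have "walk_from_to E [(y, z, 0, 1)] (Vert y) (Vert z)"
    using step by (auto simp: walk_from_to_Cons valid_step_def step_start_def step_end_def)
  ultimately show ?case
    by (blast intro: walk_from_to_append)
qed

lemma walk_to_endpoint: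
  assumes "E u v" "0 \<le> l" "l \<le> 1"
  shows "\<exists>ss. walk_from_to E ss (pt u v l) (Vert u) \<and> walk_length ss = l"
proof (cases "l = 0")
  case False
  then show ?thesis
    using assms
    by (intro exI[of _ "[(u, v, l, 0)]"])
       (auto simp: walk_from_to_Cons valid_step_def step_start_def step_end_def step_len_def)
qed (auto intro: exI[of _ "[]"])

lemma walk_from_endpoint:
  assumes "E u v" "0 \<le> l" "l \<le> 1"
  shows "\<exists>ss. walk_from_to E ss (Vert u) (pt u v l)"
proof (cases "l = 0")
  case False
  then show ?thesis
    using assms
    by (intro exI[of _ "[(u, v, 0, l)]"]) (auto simp: walk_from_to_Cons valid_step_def step_start_def step_end_def)
qed (auto intro: exI[of _ "[]"])

lemma connected_graph_walk_exists:
  assumes "simple_graph V E" "connected_graph V E"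
    and "E u v" "0 \<le> l" "l \<le> 1" and "E u' v'" "0 \<le> l'" "l' \<le> 1"
  shows "\<exists>ss. walk_from_to E ss (pt u v l) (pt u' v' l')"
proof -
  obtain ss1 where 1: "walk_from_to E ss1 (pt u v l) (Vert u)"
    using walk_to_endpoint assms(3-5) by blast
  have "(u, u') \<in> {(x, y). E x y}\<^sup>*"
    using assms(1-3,6) by (auto simp: connected_graph_def dest: simple_graph_edge_in_V)
  then obtain ss2 where 2: "walk_from_to E ss2 (Vert u) (Vert u')"
    using walk_from_to_rtrancl by blast
  obtain ss3 where 3: "walk_from_to E ss3 (Vert u') (pt u' v' l')"
    using walk_from_endpoint assms(6-8) by blast
  show ?thesis
    using walk_from_to_append[OF walk_from_to_append[OF 1 2] 3] by blast
qed

lemma gdist_le_half_endpoint: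
  assumes "undirected E" "E u v" "0 \<le> l" "l \<le> 1"
  shows "gdist E (pt u v l) (Vert u) \<le> 1/2 \<or> gdist E (pt u v l) (Vert v) \<le> 1/2"
proof (cases "l \<le> 1/2")
  case True
  then show ?thesis
    using walk_to_endpoint[of E u v l] assms(2-4) gdist_le_walk_length by fastforce
next
  case False
  have "E v u" "pt v u (1 - l) = pt u v l"
    using assms(1,2) pt_swap[of u v l] by (auto dest: undirectedD)
  then show ?thesis
    using False walk_to_endpoint[of E v u "1 - l"] assms(3,4) gdist_le_walk_length by fastforce
qed

section \<open>Closed walks\<close>

definition cyclic_walk :: "('a::linorder \<Rightarrow> 'a \<Rightarrow> bool) \<Rightarrow> 'a step list \<Rightarrow> bool" where
  "cyclic_walk E ss \<longleftrightarrow> ss \<noteq> [] \<and> (\<forall>s\<in>set ss. valid_step E s)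
     \<and> (\<forall>i<length ss. step_end (ss ! i) = step_start (ss ! (Suc i mod length ss)))"

lemma cyclic_walk_iff_tour: "cyclic_walk E ss \<longleftrightarrow> is_tour E ss \<and> ss \<noteq> []"
proof (cases "ss = []")
  case False
  have "(\<forall>i<length ss. step_end (ss ! i) = step_start (ss ! (Suc i mod length ss))) \<longleftrightarrow>
        (\<forall>i. Suc i < length ss \<longrightarrow> step_end (ss ! i) = step_start (ss ! Suc i))
        \<and> step_start (hd ss) = step_end (last ss)" (is "?cyc \<longleftrightarrow> ?lin")
  proof
    assume cyc: ?cyc
    have "step_end (ss ! (length ss - 1)) = step_start (ss ! 0)"
      using cyc[rule_format, of "length ss - 1"] False by simp
    then show ?lin
      using cyc False by (simp add: hd_conv_nth last_conv_nth)
  next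
    assume lin: ?lin
    show ?cyc
    proof (intro allI impI)
      fix i assume "i < length ss"
      show "step_end (ss ! i) = step_start (ss ! (Suc i mod length ss))"
      proof (cases "Suc i < length ss")
        case False
        then have "Suc i = length ss"
          using \<open>i < length ss\<close> by simp
        then have "i = length ss - 1" "Suc i mod length ss = 0"
          by simp_all
        then show ?thesis
          using lin \<open>ss \<noteq> []\<close> by (simp add: hd_conv_nth last_conv_nth)
      qed (use lin in simp)
    qed
  qed
  then show ?thesis
    using False by (auto simp: cyclic_walk_def is_tour_def is_walk_def)
qed (simp add: cyclic_walk_def)

lemma cyclic_walk_step_end:
  "cyclic_walk E ss \<Longrightarrow> k < length ss \<Longrightarrow> step_end (ss ! k) = step_start (ss ! (Suc k mod length ss))"
  by (simp add: cyclic_walk_def)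

lemma cyclic_walk_valid_step: "cyclic_walk E ss \<Longrightarrow> s \<in> set ss \<Longrightarrow> valid_step E s"
  by (simp add: cyclic_walk_def)

lemma cyclic_walk_step_end_in_starts:
  assumes "cyclic_walk E ss" "s \<in> set ss"
  shows "step_end s \<in> step_start ` set ss"
proof -
  obtain k where k: "k < length ss" "s = ss ! k"
    using assms(2) by (auto simp: in_set_conv_nth)
  then have "Suc k mod length ss < length ss"
    by (intro mod_less_divisor) linarith
  then show ?thesis
    using cyclic_walk_step_end[OF assms(1) k(1)] k(2) by auto
qed

lemma cyclic_walk_from_to:
  "cyclic_walk E ss \<Longrightarrow> walk_from_to E ss (step_start (hd ss)) (step_start (hd ss))"
  by (auto simp: cyclic_walk_iff_tour walk_from_to_def is_tour_def)

lemma cyclic_walk_rotate: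
  assumes "cyclic_walk E ss"
  shows "cyclic_walk E (rotate k ss)"
proof -
  let ?n = "length ss"
  have "step_end (rotate k ss ! i) = step_start (rotate k ss ! (Suc i mod ?n))" if "i < ?n" for i
  proof -
    have "(k + Suc i mod ?n) mod ?n = Suc ((k + i) mod ?n) mod ?n"
      by (metis add_Suc_right mod_Suc_eq mod_add_right_eq)
    then show ?thesis
      using that assms cyclic_walk_step_end[OF assms, of "(k + i) mod ?n"]
      by (auto simp: nth_rotate cyclic_walk_def)
  qed
  then show ?thesis
    using assms by (auto simp: cyclic_walk_def)
qed

lemma sum_list_map_rotate: "sum_list (map f (rotate k xs)) = sum_list (map f xs)"
  for f :: "'a \<Rightarrow> 'b::comm_monoid_add"
proof -
  let ?j = "k mod length xs"
  have "sum_list (map f (rotate k xs)) = sum_list (map f (drop ?j xs)) + sum_list (map f (take ?j xs))"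
    by (simp add: rotate_drop_take)
  also have "\<dots> = sum_list (map f (take ?j xs @ drop ?j xs))"
    by (simp only: map_append sum_list_append add.commute)
  finally show ?thesis
    by simp
qed

lemma walk_points_rotate [simp]: "walk_points (rotate k ss) = walk_points ss"
  unfolding walk_points_def by simp

lemma step_start_in_cover: "step_start s \<in> step_cover s"
  and step_end_in_cover: "step_end s \<in> step_cover s"
  by (cases s; force simp: step_cover_def step_start_def step_end_def)+

lemma step_cover_subset_walk_points: "s \<in> set ss \<Longrightarrow> step_cover s \<subseteq> walk_points ss"
  by (auto simp: walk_points_def)

lemma walk_points_nth: "q \<in> walk_points ss \<longleftrightarrow> (\<exists>k<length ss. q \<in> step_cover (ss ! k))"
proof
  assume "q \<in> walk_points ss"
  then obtain s where "s \<in> set ss" "q \<in> step_cover s"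
    by (auto simp: walk_points_def)
  then show "\<exists>k<length ss. q \<in> step_cover (ss ! k)"
    by (metis in_set_conv_nth)
qed (auto simp: walk_points_def)

lemma walk_points_on_edge:
  assumes "cyclic_walk E ss" "q \<in> walk_points ss"
  shows "\<exists>u v t. E u v \<and> 0 \<le> t \<and> t \<le> 1 \<and> q = pt u v t"
proof -
  obtain u v l m where s: "(u, v, l, m) \<in> set ss" "q \<in> step_cover (u, v, l, m)"
    using assms(2) by (auto simp: walk_points_def)
  then obtain t where "min l m \<le> t" "t \<le> max l m" "q = pt u v t"
    by (auto simp: step_cover_def)
  moreover have "E u v" "0 \<le> l" "l \<le> 1" "0 \<le> m" "m \<le> 1"
    using cyclic_walk_valid_step[OF assms(1) s(1)] by (auto simp: valid_step_def)
  ultimately show ?thesis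
    by (metis min_le_iff_disj le_max_iff_disj order_trans)
qed

definition visited :: "'a::linorder step list \<Rightarrow> 'a set" where
  "visited ss = {v. Vert v \<in> walk_points ss}"

lemma visited_at_step_start:
  assumes "cyclic_walk E ss" "v \<in> visited ss"
  shows "Vert v \<in> step_start ` set ss"
proof -
  obtain u w l m where s: "(u, w, l, m) \<in> set ss" "Vert v \<in> step_cover (u, w, l, m)"
    using assms(2) by (auto simp: visited_def walk_points_def)
  then obtain t where t: "min l m \<le> t" "t \<le> max l m" "Vert v = pt u w t"
    by (auto simp: step_cover_def)
  have lm: "0 \<le> l" "l \<le> 1" "0 \<le> m" "m \<le> 1"
    using cyclic_walk_valid_step[OF assms(1) s(1)] by (auto simp: valid_step_def)
  then have "0 \<le> t" "t \<le> 1"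
    using t(1,2) by (auto simp: min_le_iff_disj le_max_iff_disj)
  then have "t = 0 \<or> t = 1"
    using pt_is_Vert_iff t(3) by metis
  then have "t = l \<or> t = m"
    using t(1,2) lm by (auto simp: min_le_iff_disj le_max_iff_disj)
  then have "Vert v = step_start (u, w, l, m) \<or> Vert v = step_end (u, w, l, m)"
    using t(3) by (auto simp: step_start_def step_end_def)
  then show ?thesis
    using s(1) cyclic_walk_step_end_in_starts[OF assms(1) s(1)] by auto
qed

lemma delta_tour_cyclic_walk: "delta_tour E \<delta> ss \<Longrightarrow> E u v \<Longrightarrow> cyclic_walk E ss"
  using pt_in_Pts[of E u v 0]
  by (force simp: delta_tour_def cyclic_walk_iff_tour walk_points_def)

section \<open>From TSP-tours to 1/2-tours\<close>

fun edge_steps :: "'a list \<Rightarrow> 'a step list" where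
  "edge_steps (u # v # vs) = (u, v, 0, 1) # edge_steps (v # vs)"
| "edge_steps _ = []"

lemma edge_steps_walk:
  assumes "successively E vs" "vs \<noteq> []"
  shows "walk_from_to E (edge_steps vs) (Vert (hd vs)) (Vert (last vs))"
    and "walk_length (edge_steps vs) = real (length vs - 1)"
  using assms
  by (induction vs rule: edge_steps.induct)
     (auto simp: walk_from_to_Cons valid_step_def step_start_def step_end_def step_len_def)

lemma edge_steps_walk_points:
  "v \<in> set vs \<Longrightarrow> 2 \<le> length vs \<Longrightarrow> Vert v \<in> walk_points (edge_steps vs)"
proof (induction vs rule: edge_steps.induct)
  case (1 u w vs)
  have "Vert u \<in> step_cover (u, w, 0, 1)" "Vert w \<in> step_cover (u, w, 0, 1)"
    using step_start_in_cover[of "(u, w, 0, 1)"] step_end_in_cover[of "(u, w, 0, 1)"]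
    by (simp_all add: step_start_def step_end_def)
  then show ?case
    using 1 by (cases vs) (auto simp: walk_points_def)
qed auto

definition shuttle :: "'a \<Rightarrow> 'a \<Rightarrow> real \<Rightarrow> nat \<Rightarrow> 'a step list" where
  "shuttle a b t N = concat (replicate N [(a, b, 0, t), (a, b, t, 0)])"

lemma shuttle_walk:
  assumes "E a b" "0 < t" "t \<le> 1"
  shows "walk_from_to E (shuttle a b t N) (Vert a) (Vert a) \<and> walk_length (shuttle a b t N) = 2 * N * t"
proof (induction N)
  case (Suc N)
  have back_and_forth: "walk_from_to E [(a, b, 0, t), (a, b, t, 0)] (Vert a) (Vert a)"
    using assms by (auto simp: walk_from_to_Cons valid_step_def step_start_def step_end_def)
  have "shuttle a b t (Suc N) = [(a, b, 0, t), (a, b, t, 0)] @ shuttle a b t N"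
    by (simp add: shuttle_def)
  then show ?case
    using walk_from_to_append[OF back_and_forth] Suc assms by (simp add: step_len_def algebra_simps)
qed (simp add: shuttle_def)

lemma closed_walk_of_any_length:
  assumes "E a b" "0 \<le> r"
  shows "\<exists>ss. walk_from_to E ss (Vert a) (Vert a) \<and> walk_length ss = r"
proof (cases "r = 0")
  case False
  define N where "N = nat \<lceil>r\<rceil>"
  have "r \<le> real N" "1 \<le> N"
    using False assms(2) unfolding N_def by linarith+
  then have "0 < r / (2 * real N)" "r / (2 * real N) \<le> 1" "2 * real N * (r / (2 * real N)) = r"
    using False assms(2) by (auto simp: field_simps)
  then show ?thesis
    using shuttle_walk[of E a b, OF assms(1)] by metis
qed (auto intro: exI[of _ "[]"])

lemma half_cover_of_vertices:
  assumes "simple_graph V E" "\<And>v. v \<in> V \<Longrightarrow> Vert v \<in> P" "p \<in> Pts E"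
  shows "\<exists>q\<in>P. gdist E p q \<le> 1/2"
proof -
  obtain u v l where p: "p = pt u v l" "E u v" "0 \<le> l" "l \<le> 1"
    using assms(3) unfolding Pts_def by blast
  have "Vert u \<in> P" "Vert v \<in> P"
    using assms(2) simple_graph_edge_in_V[OF assms(1) p(2)] by simp_all
  then show ?thesis
    using gdist_le_half_endpoint[OF simple_graph_undirected[OF assms(1)] p(2-4)] p(1) by blast
qed

lemma tsp_tour_imp_half_tour:
  assumes "simple_graph V E" "E u0 v0" "tsp_tour V E vs" "real (tsp_length vs) \<le> K"
  shows "\<exists>ss. delta_tour E (1/2) ss \<and> walk_length ss = K"
proof -
  have vs: "vs \<noteq> []" "hd vs = last vs" "successively E vs" "V \<subseteq> set vs"
    using assms(3) by (auto simp: tsp_tour_def successively_conv_nth)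
  have "u0 \<in> set vs" "v0 \<in> set vs" "u0 \<noteq> v0"
    using vs(4) assms(1,2) by (auto dest: simple_graph_edge_in_V simple_graph_undirected undirectedD)
  then have "card {u0, v0} \<le> card (set vs)"
    by (intro card_mono) auto
  then have len: "2 \<le> length vs"
    using card_length[of vs] \<open>u0 \<noteq> v0\<close> by simp
  then have "E (hd vs) (vs ! 1)"
    using vs(1,3) by (simp add: successively_conv_nth hd_conv_nth)
  moreover have "0 \<le> K - real (length vs - 1)"
    using assms(4) by (simp add: tsp_length_def)
  ultimately obtain ps where ps: "walk_from_to E ps (Vert (hd vs)) (Vert (hd vs))"
    "walk_length ps = K - real (length vs - 1)"
    using closed_walk_of_any_length by blast
  define ss where "ss = ps @ edge_steps vs"
  have "walk_points (edge_steps vs) \<subseteq> walk_points ss"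
    by (auto simp: ss_def walk_points_def)
  then have visits: "Vert v \<in> walk_points ss" if "v \<in> set vs" for v
    using that edge_steps_walk_points[OF _ len] by blast
  have "walk_from_to E ss (Vert (hd vs)) (Vert (hd vs))"
    unfolding ss_def using ps(1) edge_steps_walk(1)[OF vs(3,1)] vs(2) by (simp add: walk_from_to_append)
  moreover have "ss \<noteq> []"
    using visits[OF \<open>u0 \<in> set vs\<close>] by (auto simp: walk_points_def)
  ultimately have "is_tour E ss"
    by (auto simp: walk_from_to_def is_tour_def)
  moreover have "walk_length ss = K"
    unfolding ss_def using ps(2) edge_steps_walk(2)[OF vs(3,1)] by simp
  moreover have "\<exists>q\<in>walk_points ss. gdist E p q \<le> 1/2" if "p \<in> Pts E" for p
    using half_cover_of_vertices[OF assms(1), of "walk_points ss" p] visits vs(4) that by blast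
  ultimately show ?thesis
    unfolding delta_tour_def by (intro exI[of _ ss]) blast
qed

section \<open>The visited vertices of a 1/2-tour cover all edges\<close>

lemma abs_max_0_diff_le: "\<bar>max 0 a - max 0 b\<bar> \<le> \<bar>a - b\<bar>" for a b :: real
  by (auto simp: max_def)

lemma midpoint_potential:
  assumes "undirected E" "E x z"
  shows "\<exists>\<psi>. edge_lipschitz E \<psi> \<and> \<psi> (pt x z (1/2)) = 1 \<and>
    (\<forall>u v t. E u v \<longrightarrow> 0 \<le> t \<longrightarrow> t \<le> 1 \<longrightarrow> 1/2 \<le> \<psi> (pt u v t) \<longrightarrow>
       (\<exists>t'. 0 \<le> t' \<and> t' \<le> 1 \<and> pt u v t = pt x z t'))"
proof -
  have xz: "x \<noteq> z" "E z x"
    using assms by (auto dest: undirectedD)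
  define \<nu> where "\<nu> w = (if w = x \<or> w = z then 1/2 else (0::real))" for w
  define \<Phi> where "\<Phi> a b l =
    (if (a = x \<and> b = z) \<or> (a = z \<and> b = x) then 1 - \<bar>l - 1/2\<bar>
     else if a = x \<or> a = z then max 0 (1/2 - l)
     else if b = x \<or> b = z then max 0 (l - 1/2) else (0::real))" for a b l
  have \<Phi>_0: "\<Phi> a b 0 = \<nu> a" and \<Phi>_1: "\<Phi> a b 1 = \<nu> b" if "E a b" for a b
    using that xz assms(1) unfolding \<Phi>_def \<nu>_def by (auto dest: undirectedD)
  have \<Phi>_swap: "\<Phi> b a (1 - l) = \<Phi> a b l" if "E a b" for a b l
    using that xz assms(1) unfolding \<Phi>_def by (auto simp: abs_minus_commute max_def dest: undirectedD)
  have \<Phi>_pt: "point_fun \<nu> \<Phi> (pt u v t) = \<Phi> u v t" if "E u v" "0 \<le> t" "t \<le> 1" for u v t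
    using that assms(1) \<Phi>_0 \<Phi>_1 \<Phi>_swap by (intro point_fun_pt) (auto dest: undirectedD)
  have "edge_lipschitz E (point_fun \<nu> \<Phi>)"
    using assms(1) \<Phi>_0 \<Phi>_1 \<Phi>_swap abs_max_0_diff_le
    by (intro edge_lipschitz_point_fun) (auto simp: \<Phi>_def abs_if max_def)
  moreover have "point_fun \<nu> \<Phi> (pt x z (1/2)) = 1"
    using \<Phi>_pt[OF assms(2)] by (simp add: \<Phi>_def)
  moreover have "\<exists>t'. 0 \<le> t' \<and> t' \<le> 1 \<and> pt u v t = pt x z t'"
    if uv: "E u v" "0 \<le> t" "t \<le> 1" and big: "1/2 \<le> point_fun \<nu> \<Phi> (pt u v t)" for u v t
  proof -
    consider "u = x" "v = z" | "u = z" "v = x" | "t = 0" "u = x \<or> u = z" | "t = 1" "v = x \<or> v = z"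
      using big uv(2,3) unfolding \<Phi>_pt[OF uv] \<Phi>_def by (auto simp: max_def split: if_splits)
    then show ?thesis
    proof cases
      case 2
      then show ?thesis
        using pt_swap[of u v t] xz(1) uv(2,3) by (intro exI[of _ "1 - t"]) auto
    qed (use uv(2,3) in \<open>auto intro: exI[of _ 0] exI[of _ 1]\<close>)
  qed
  ultimately show ?thesis
    by (intro exI[of _ "point_fun \<nu> \<Phi>"]) blast
qed

lemma near_midpoint_on_edge:
  assumes "simple_graph V E" "connected_graph V E" "E x z"
    and "E u v" "0 \<le> t" "t \<le> 1" and "gdist E (pt x z (1/2)) (pt u v t) \<le> 1/2"
  shows "\<exists>t'. 0 \<le> t' \<and> t' \<le> 1 \<and> pt u v t = pt x z t'"
proof -
  obtain \<psi> where \<psi>: "edge_lipschitz E \<psi>" "\<psi> (pt x z (1/2)) = 1"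
    and on_edge: "\<And>u v t. E u v \<Longrightarrow> 0 \<le> t \<Longrightarrow> t \<le> 1 \<Longrightarrow> 1/2 \<le> \<psi> (pt u v t) \<Longrightarrow>
       \<exists>t'. 0 \<le> t' \<and> t' \<le> 1 \<and> pt u v t = pt x z t'"
    using midpoint_potential[OF simple_graph_undirected[OF assms(1)] assms(3)] by blast
  obtain w where "walk_from_to E w (pt x z (1/2)) (pt u v t)"
    using connected_graph_walk_exists[OF assms(1,2,3)] assms(4-6) by force
  then have "\<bar>\<psi> (pt u v t) - 1\<bar> \<le> 1/2"
    using edge_lipschitz_le_gdist[OF \<psi>(1)] \<psi>(2) assms(7) by fastforce
  then have "1/2 \<le> \<psi> (pt u v t)"
    by linarith
  then show ?thesis
    using on_edge[OF assms(4-6)] by blast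
qed

lemma step_cover_on_edge:
  assumes "undirected E" "valid_step E s" "E x z"
    and "pt x z t0 \<in> step_cover s" "0 < t0" "t0 < 1" and "q \<in> step_cover s"
  shows "\<exists>t. 0 \<le> t \<and> t \<le> 1 \<and> q = pt x z t"
proof -
  obtain u v l m where s: "s = (u, v, l, m)"
    by (cases s)
  have uv: "E u v" "u \<noteq> v" "0 \<le> l" "l \<le> 1" "0 \<le> m" "m \<le> 1"
    using assms(1,2) by (auto simp: s valid_step_def dest: undirectedD)
  have on_segment: "\<exists>t. 0 \<le> t \<and> t \<le> 1 \<and> p = pt u v t" if p: "p \<in> step_cover s" for p
  proof -
    obtain t where "min l m \<le> t" "t \<le> max l m" "p = pt u v t"
      using p by (auto simp: s step_cover_def)
    then show ?thesis
      using uv(3-6) by (intro exI[of _ t]) (auto simp: min_le_iff_disj le_max_iff_disj)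
  qed
  obtain t1 where "0 \<le> t1" "t1 \<le> 1" "pt u v t1 = pt x z t0"
    using on_segment[OF assms(4)] by metis
  then have "(u = x \<and> v = z) \<or> (u = z \<and> v = x)"
    using pt_eq_pt_interiorD[of x z u v t0 t1] assms(1,3,5,6) uv(2) by (auto dest: undirectedD)
  moreover obtain t where t: "0 \<le> t" "t \<le> 1" "q = pt u v t"
    using on_segment[OF assms(7)] by blast
  ultimately show ?thesis
  proof (elim disjE conjE)
    assume "u = x" "v = z"
    then show ?thesis
      using t by (intro exI[of _ t]) auto
  next
    assume "u = z" "v = x"
    then show ?thesis
      using pt_swap[OF uv(2)] t by (intro exI[of _ "1 - t"]) auto
  qed
qed

lemma cyclic_walk_inside_open_edge:
  assumes "undirected E" "cyclic_walk E ss" "E x z"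
    and "Vert x \<notin> walk_points ss" "Vert z \<notin> walk_points ss"
    and "pt x z t0 \<in> walk_points ss" "0 < t0" "t0 < 1" and "q \<in> walk_points ss"
  shows "\<exists>t. 0 < t \<and> t < 1 \<and> q = pt x z t"
proof -
  let ?n = "length ss"
  define P where "P k \<longleftrightarrow> (\<exists>t. 0 < t \<and> t < 1 \<and> pt x z t \<in> step_cover (ss ! k))" for k
  have inside: "\<exists>t. 0 < t \<and> t < 1 \<and> p = pt x z t" if k: "k < ?n" "P k" and p: "p \<in> step_cover (ss ! k)" for k p
  proof -
    obtain t1 where "0 < t1" "t1 < 1" "pt x z t1 \<in> step_cover (ss ! k)"
      using k(2) unfolding P_def by blast
    then obtain t where t: "0 \<le> t" "t \<le> 1" "p = pt x z t"
      using step_cover_on_edge[OF assms(1) cyclic_walk_valid_step[OF assms(2)] assms(3) _ _ _ p] k(1)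
      by (meson nth_mem)
    moreover have "p \<in> walk_points ss"
      using k(1) p walk_points_nth by blast
    then have "t \<noteq> 0" "t \<noteq> 1"
      using assms(4,5) t(3) by auto
    ultimately show ?thesis
      by (intro exI[of _ t]) auto
  qed
  have P_next: "P (Suc k mod ?n)" if k: "k < ?n" "P k" for k
  proof -
    obtain t where "0 < t" "t < 1" "pt x z t = step_start (ss ! (Suc k mod ?n))"
      using inside[OF k step_end_in_cover] cyclic_walk_step_end[OF assms(2) k(1)] by auto
    then show ?thesis
      using step_start_in_cover unfolding P_def by metis
  qed
  obtain k0 where k0: "k0 < ?n" "P k0"
    using assms(6-8) unfolding P_def walk_points_nth by blast
  have n: "0 < ?n"
    using k0(1) by linarith
  have P_all: "P ((k0 + d) mod ?n)" for d
  proof (induction d)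
    case (Suc d)
    then show ?case
      using P_next[of "(k0 + d) mod ?n"] n by (simp add: mod_Suc_eq)
  qed (use k0 in simp)
  obtain k where k: "k < ?n" "q \<in> step_cover (ss ! k)"
    using assms(9) unfolding walk_points_nth by blast
  moreover have "P k"
    using P_all[of "k + ?n - k0"] k0(1) k(1) by simp
  ultimately show ?thesis
    using inside by blast
qed

lemma half_tour_visits_edge:
  assumes "simple_graph V E" "connected_graph V E" "min_degree_two V E"
    and "delta_tour E (1/2) ss" "E x z"
  shows "x \<in> visited ss \<or> z \<in> visited ss"
proof (rule ccontr)
  assume "\<not> ?thesis"
  then have unvisited: "Vert x \<notin> walk_points ss" "Vert z \<notin> walk_points ss"
    by (auto simp: visited_def)
  have und: "undirected E" and cyc: "cyclic_walk E ss"
    using assms(1,4,5) simple_graph_undirected delta_tour_cyclic_walk by blast+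
  have near_edge: "\<exists>q\<in>walk_points ss. \<exists>t. 0 \<le> t \<and> t \<le> 1 \<and> q = pt x y t" if xy: "E x y" for y
  proof -
    obtain q where q: "q \<in> walk_points ss" "gdist E (pt x y (1/2)) q \<le> 1/2"
      using assms(4) pt_in_Pts[of E x y "1/2"] xy by (force simp: delta_tour_def)
    then show ?thesis
      using walk_points_on_edge[OF cyc q(1)] near_midpoint_on_edge[OF assms(1,2) xy] by metis
  qed
  obtain t0 where t0: "pt x z t0 \<in> walk_points ss" "0 < t0" "t0 < 1"
    using near_edge[OF assms(5)] unvisited by (metis le_less pt_0 pt_1)
  obtain z' where z': "E x z'" "z' \<noteq> z"
    using min_degree_two_other_neighbour assms(1,3,5) simple_graph_edge_in_V by metis
  then obtain q t where q: "q \<in> walk_points ss" "0 \<le> t" "t \<le> 1" "q = pt x z' t"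
    using near_edge by blast
  moreover obtain t' where "0 < t'" "t' < 1" "q = pt x z t'"
    using cyclic_walk_inside_open_edge[OF und cyc assms(5) unvisited t0 q(1)] by blast
  ultimately show False
    using pt_eq_pt_interiorD[of x z x z' t' t] und assms(5) z' by (auto dest: undirectedD)
qed

section \<open>Length spent at an unvisited vertex\<close>

definition edge_coord :: "'a \<Rightarrow> 'a \<Rightarrow> 'a \<Rightarrow> 'a \<Rightarrow> real \<Rightarrow> real" where
  "edge_coord x y u v t = (if u = x \<and> v = y then t else if u = y \<and> v = x then 1 - t else 0)"

text \<open>\<open>edge_depth x y\<close> jumps to 1 at \<open>Vert y\<close>, so it is only evaluated on walks avoiding \<open>y\<close>.\<close>

definition edge_depth :: "'a \<Rightarrow> 'a \<Rightarrow> 'a point \<Rightarrow> real" where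
  "edge_depth x y = point_fun (\<lambda>w. if w = y then 1 else 0) (edge_coord x y)"

lemma edge_coord_swap: "u \<noteq> v \<Longrightarrow> edge_coord x y v u (1 - t) = edge_coord x y u v t"
  unfolding edge_coord_def by argo

lemma edge_depth_pt:
  assumes "u \<noteq> v" "0 \<le> t" "t \<le> 1" "pt u v t \<noteq> Vert y"
  shows "edge_depth x y (pt u v t) = edge_coord x y u v t"
proof -
  consider "t = 0" | "t = 1" | "0 < t" "t < 1" "u < v" | "0 < t" "t < 1" "\<not> u < v"
    using assms(2,3) by linarith
  then show ?thesis
  proof cases
    case 1
    then have "pt u v t = Vert u" "u \<noteq> y"
      using assms(4) by auto
    then show ?thesis
      using 1 by (simp add: edge_depth_def point_fun_def edge_coord_def)
  next
    case 2
    then have "pt u v t = Vert v" "v \<noteq> y"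
      using assms(4) by auto
    then show ?thesis
      using 2 assms(1) by (simp add: edge_depth_def point_fun_def edge_coord_def)
  next
    case 3
    then have "pt u v t = Mid u v t"
      by (simp add: pt_def)
    then show ?thesis
      by (simp add: edge_depth_def point_fun_def)
  next
    case 4
    then have "pt u v t = Mid v u (1 - t)"
      by (simp add: pt_def)
    then show ?thesis
      using edge_coord_swap[OF assms(1)] by (simp add: edge_depth_def point_fun_def)
  qed
qed

lemma edge_coord_between:
  "min l m \<le> t \<Longrightarrow> t \<le> max l m \<Longrightarrow>
    edge_coord x y u v t \<le> max (edge_coord x y u v l) (edge_coord x y u v m)"
  unfolding edge_coord_def min_def max_def by argo

definition edge_len :: "'a \<Rightarrow> 'a \<Rightarrow> 'a step \<Rightarrow> real" where
  "edge_len x y s = (case s of (u, v, l, m) \<Rightarrow> if (u = x \<and> v = y) \<or> (u = y \<and> v = x) then \<bar>l - m\<bar> else 0)"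

definition incident_len :: "'a \<Rightarrow> 'a step \<Rightarrow> real" where
  "incident_len y s = (case s of (u, v, l, m) \<Rightarrow> if u = y \<or> v = y then \<bar>l - m\<bar> else 0)"

lemma edge_coord_diff_le_edge_len:
  "u \<noteq> v \<Longrightarrow> \<bar>edge_coord x y u v m - edge_coord x y u v l\<bar> \<le> edge_len x y (u, v, l, m)"
  unfolding edge_coord_def edge_len_def prod.case by argo

lemma edge_depth_on_step:
  assumes "undirected E" "valid_step E s" "Vert y \<notin> step_cover s"
  shows "\<bar>edge_depth x y (step_end s) - edge_depth x y (step_start s)\<bar> \<le> edge_len x y s"
    and "q \<in> step_cover s \<Longrightarrow>
      edge_depth x y q \<le> max (edge_depth x y (step_start s)) (edge_depth x y (step_end s))"
proof -
  obtain u v l m where s: "s = (u, v, l, m)"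
    by (cases s)
  have uv: "u \<noteq> v" "0 \<le> l" "l \<le> 1" "0 \<le> m" "m \<le> 1"
    using assms(1,2) by (auto simp: s valid_step_def dest: undirectedD)
  have depth: "edge_depth x y (pt u v t) = edge_coord x y u v t" if t: "min l m \<le> t" "t \<le> max l m" for t
  proof (rule edge_depth_pt[OF uv(1)])
    show "0 \<le> t" "t \<le> 1"
      using t uv by (auto simp: min_le_iff_disj le_max_iff_disj)
    show "pt u v t \<noteq> Vert y"
      using t assms(3) by (auto simp: s step_cover_def)
  qed
  have start: "edge_depth x y (step_start s) = edge_coord x y u v l"
    and end': "edge_depth x y (step_end s) = edge_coord x y u v m"
    using depth[of l] depth[of m] by (simp_all add: s step_start_def step_end_def)
  then show "\<bar>edge_depth x y (step_end s) - edge_depth x y (step_start s)\<bar> \<le> edge_len x y s"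
    using edge_coord_diff_le_edge_len[OF uv(1)] by (simp add: s)
  assume "q \<in> step_cover s"
  then obtain t where t: "min l m \<le> t" "t \<le> max l m" "q = pt u v t"
    by (auto simp: s step_cover_def)
  then show "edge_depth x y q \<le> max (edge_depth x y (step_start s)) (edge_depth x y (step_end s))"
    using depth[OF t(1,2)] t(3) start end' edge_coord_between[OF t(1,2)] by simp
qed

lemma cyclic_walk_oscillation:
  fixes g :: "'a::linorder point \<Rightarrow> real" and \<omega> :: "'a step \<Rightarrow> real"
  assumes "cyclic_walk E ss"
    and "\<And>s. s \<in> set ss \<Longrightarrow> \<bar>g (step_end s) - g (step_start s)\<bar> \<le> \<omega> s"
    and "p \<in> step_start ` set ss" "q \<in> step_start ` set ss"
  shows "2 * \<bar>g q - g p\<bar> \<le> sum_list (map \<omega> ss)"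
proof -
  obtain k where k: "k < length ss" "p = step_start (ss ! k)"
    using assms(3) by (auto simp: in_set_conv_nth)
  define rs where "rs = rotate k ss"
  have "cyclic_walk E rs" "set rs = set ss"
    using cyclic_walk_rotate[OF assms(1)] by (simp_all add: rs_def)
  moreover have "ss \<noteq> []"
    using k(1) by auto
  then have "step_start (hd rs) = p"
    using k by (simp add: rs_def hd_rotate_conv_nth)
  ultimately have closed: "walk_from_to E rs p p"
    using cyclic_walk_from_to by metis
  obtain s where "s \<in> set rs" "q = step_start s"
    using assms(4) \<open>set rs = set ss\<close> by auto
  then obtain j where j: "j < length rs" "q = step_start (rs ! j)"
    by (auto simp: in_set_conv_nth)
  then have "walk_from_to E (take j rs) p q" "walk_from_to E (drop j rs) q p"
    using walk_from_to_appendD[of E "take j rs" "drop j rs" p p] closed by (simp_all add: hd_drop_conv_nth)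
  then have "\<bar>g q - g p\<bar> \<le> sum_list (map \<omega> (take j rs))" "\<bar>g p - g q\<bar> \<le> sum_list (map \<omega> (drop j rs))"
    using walk_variation assms(2) \<open>set rs = set ss\<close> by (metis in_set_takeD, metis in_set_dropD)
  moreover have "sum_list (map \<omega> (take j rs)) + sum_list (map \<omega> (drop j rs)) = sum_list (map \<omega> ss)"
    by (simp add: rs_def sum_list_map_rotate flip: sum_list_append map_append)
  ultimately show ?thesis
    by (simp add: abs_minus_commute)
qed

lemma delta_tour_potential_bound:
  assumes "simple_graph V E" "connected_graph V E" "delta_tour E \<delta> ss" "edge_lipschitz E \<psi>"
    and "p \<in> Pts E" and "\<And>q. q \<in> walk_points ss \<Longrightarrow> \<psi> q \<le> B"
  shows "\<psi> p \<le> B + \<delta>"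
proof -
  obtain u v l where p: "p = pt u v l" "E u v" "0 \<le> l" "l \<le> 1"
    using assms(5) unfolding Pts_def by blast
  obtain q where q: "q \<in> walk_points ss" "gdist E p q \<le> \<delta>"
    using assms(3,5) by (auto simp: delta_tour_def)
  have "cyclic_walk E ss"
    using delta_tour_cyclic_walk assms(3) p(2) by blast
  then obtain a b t where "E a b" "0 \<le> t" "t \<le> 1" "q = pt a b t"
    using walk_points_on_edge q(1) by blast
  then obtain w where "walk_from_to E w p q"
    using connected_graph_walk_exists[OF assms(1,2) p(2-4)] p(1) by blast
  then have "\<bar>\<psi> q - \<psi> p\<bar> \<le> \<delta>"
    using edge_lipschitz_le_gdist[OF assms(4)] q(2) by fastforce
  then show ?thesis
    using assms(6)[OF q(1)] by linarith
qed

lemma unvisited_neighbour_depth: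
  assumes "simple_graph V E" "connected_graph V E" "min_degree_two V E"
    and "delta_tour E (1/2) ss" "y \<notin> visited ss" "E y x"
  shows "\<exists>D. 0 \<le> D \<and> 2 * D \<le> sum_list (map (edge_len x y) ss)
    \<and> (\<forall>q\<in>walk_points ss. edge_depth x y q \<le> D)"
proof -
  have und: "undirected E" and cyc: "cyclic_walk E ss"
    using assms(1,4,6) simple_graph_undirected delta_tour_cyclic_walk by blast+
  have xy: "E x y" "x \<noteq> y"
    using und assms(6) by (auto dest: undirectedD)
  have "x \<in> visited ss"
    using half_tour_visits_edge[OF assms(1-4) xy(1)] assms(5) by blast
  then have x_start: "Vert x \<in> step_start ` set ss"
    using visited_at_step_start[OF cyc] by blast
  have depth_x: "edge_depth x y (Vert x) = 0"
    using xy(2) by (simp add: edge_depth_def point_fun_def)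
  have avoid_y: "Vert y \<notin> step_cover s" if "s \<in> set ss" for s
    using assms(5) step_cover_subset_walk_points[OF that] by (auto simp: visited_def)
  define S where "S = edge_depth x y ` step_start ` set ss"
  have S: "finite S" "S \<noteq> {}"
    using x_start by (auto simp: S_def)
  define D where "D = Max S"
  have le_D: "edge_depth x y r \<le> D" if "r \<in> step_start ` set ss" for r
    using S that unfolding D_def S_def by (intro Max_ge) auto
  have "D \<in> S"
    using Max_in[OF S] by (simp add: D_def)
  then obtain r where r: "r \<in> step_start ` set ss" "edge_depth x y r = D"
    unfolding S_def by blast
  have "0 \<le> D"
    using le_D[OF x_start] depth_x by simp
  moreover have "2 * D \<le> sum_list (map (edge_len x y) ss)"
    using cyclic_walk_oscillation[OF cyc _ x_start r(1), of "edge_depth x y" "edge_len x y"]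
      edge_depth_on_step(1)[OF und cyclic_walk_valid_step[OF cyc] avoid_y] r(2) depth_x \<open>0 \<le> D\<close>
    by simp
  moreover have "edge_depth x y q \<le> D" if q: "q \<in> walk_points ss" for q
  proof -
    obtain s where s: "s \<in> set ss" "q \<in> step_cover s"
      using q unfolding walk_points_def by blast
    then have "edge_depth x y q \<le> max (edge_depth x y (step_start s)) (edge_depth x y (step_end s))"
      using edge_depth_on_step(2)[OF und cyclic_walk_valid_step[OF cyc] avoid_y] by blast
    moreover have "edge_depth x y (step_start s) \<le> D" "edge_depth x y (step_end s) \<le> D"
      using le_D cyclic_walk_step_end_in_starts[OF cyc s(1)] s(1) by auto
    ultimately show ?thesis
      by simp
  qed
  ultimately show ?thesis
    by blast
qed

lemma abs_max_0_tent_diff_le: "\<bar>max 0 (c - \<bar>m - c\<bar>) - max 0 (c - \<bar>l - c\<bar>)\<bar> \<le> \<bar>l - m\<bar>" for c l m :: real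
  using abs_max_0_diff_le[of "c - \<bar>m - c\<bar>" "c - \<bar>l - c\<bar>"] by arith

lemma spike_potential:
  assumes "undirected E" "E x y" "0 \<le> s" "s \<le> 1/2"
  shows "\<exists>\<psi>. edge_lipschitz E \<psi> \<and> \<psi> (pt x y (1 - s)) = 1 - s \<and>
    (\<forall>a b t. E a b \<longrightarrow> 0 \<le> t \<longrightarrow> t \<le> 1 \<longrightarrow> a \<noteq> y \<longrightarrow>
       \<psi> (pt a b t) \<le> (if b \<noteq> y then 0 else if a = x then t else max 0 (t - 2 * s)))"
proof -
  define f where "f a t = (if a = x then max 0 (1 - s - \<bar>t - (1 - s)\<bar>) else max 0 (t - 2 * s))" for a t
  define \<Phi> where "\<Phi> a b l = (if b = y then f a l else if a = y then f b (1 - l) else 0)" for a b l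
  define \<nu> where "\<nu> w = (if w = y then 1 - 2 * s else 0)" for w
  have f_0: "f a 0 = 0" and f_1: "f a 1 = 1 - 2 * s" for a
    using assms(3,4) by (auto simp: f_def)
  have f_lip: "\<bar>f a m - f a l\<bar> \<le> \<bar>l - m\<bar>" for a l m
    using abs_max_0_tent_diff_le[of "1 - s" m l] abs_max_0_diff_le[of "m - 2 * s" "l - 2 * s"]
    by (auto simp: f_def abs_minus_commute)
  have \<Phi>_0: "\<Phi> a b 0 = \<nu> a" and \<Phi>_1: "\<Phi> a b 1 = \<nu> b" if "E a b" for a b
    using that assms(1) f_0 f_1 by (auto simp: \<Phi>_def \<nu>_def dest: undirectedD)
  have \<Phi>_swap: "\<Phi> b a (1 - l) = \<Phi> a b l" if "E a b" for a b l
    using that assms(1) by (auto simp: \<Phi>_def dest: undirectedD)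
  have \<Phi>_lip: "\<bar>\<Phi> a b m - \<Phi> a b l\<bar> \<le> \<bar>l - m\<bar>" for a b l m
    using f_lip[of b "1 - m" "1 - l"] f_lip[of a m l] by (auto simp: \<Phi>_def)
  have \<Phi>_pt: "point_fun \<nu> \<Phi> (pt a b t) = \<Phi> a b t" if "E a b" "0 \<le> t" "t \<le> 1" for a b t
    using that assms(1) \<Phi>_0 \<Phi>_1 \<Phi>_swap by (intro point_fun_pt) (auto dest: undirectedD)
  have "edge_lipschitz E (point_fun \<nu> \<Phi>)"
    using assms(1) \<Phi>_0 \<Phi>_1 \<Phi>_swap \<Phi>_lip by (intro edge_lipschitz_point_fun)
  moreover have "point_fun \<nu> \<Phi> (pt x y (1 - s)) = 1 - s"
    using \<Phi>_pt[OF assms(2)] assms(3,4) by (simp add: \<Phi>_def f_def)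
  moreover have "\<Phi> a b t \<le> (if b \<noteq> y then 0 else if a = x then t else max 0 (t - 2 * s))"
    if "a \<noteq> y" "0 \<le> t" for a b t
    using that by (auto simp: \<Phi>_def f_def)
  ultimately show ?thesis
    using \<Phi>_pt by (intro exI[of _ "point_fun \<nu> \<Phi>"]) auto
qed

lemma pt_reorient_away:
  assumes "undirected E" "E a b" "0 \<le> t" "t \<le> 1"
  obtains a' b' t' where "E a' b'" "0 \<le> t'" "t' \<le> 1" "pt a b t = pt a' b' t'" "a' \<noteq> y"
proof (cases "a = y")
  case True
  then have "E b a" "b \<noteq> y" "pt a b t = pt b a (1 - t)"
    using assms(1,2) pt_swap[of a b t] by (auto dest: undirectedD)
  then show ?thesis
    using that[of b a "1 - t"] assms(3,4) by simp
qed (use that assms in blast)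

lemma neighbour_depths_sum_ge_1:
  assumes "simple_graph V E" "connected_graph V E" "delta_tour E (1/2) ss" "y \<notin> visited ss"
    and "E y x1" "E y x2" "x2 \<noteq> x1"
    and depth_le: "\<And>x q. E y x \<Longrightarrow> q \<in> walk_points ss \<Longrightarrow> edge_depth x y q \<le> D x"
    and D_max: "\<And>x. E y x \<Longrightarrow> D x \<le> D x1" and "0 \<le> D x2"
  shows "1 \<le> D x1 + D x2"
proof (cases "1 \<le> D x1")
  case False
  define s where "s = (D x1 - D x2) / 2"
  have s: "0 \<le> s" "s \<le> 1/2"
    using D_max[OF assms(6)] False assms(10) by (auto simp: s_def)
  have und: "undirected E"
    using assms(1) by (rule simple_graph_undirected)
  have x2y: "E x2 y" "x2 \<noteq> y"
    using und assms(6) by (auto dest: undirectedD)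
  obtain \<psi> where \<psi>: "edge_lipschitz E \<psi>" "\<psi> (pt x2 y (1 - s)) = 1 - s"
    and \<psi>_le: "\<And>a b t. E a b \<Longrightarrow> 0 \<le> t \<Longrightarrow> t \<le> 1 \<Longrightarrow> a \<noteq> y \<Longrightarrow>
       \<psi> (pt a b t) \<le> (if b \<noteq> y then 0 else if a = x2 then t else max 0 (t - 2 * s))"
    using spike_potential[OF und x2y(1) s] by blast
  have cyc: "cyclic_walk E ss"
    using assms(3,5) delta_tour_cyclic_walk by blast
  have "\<psi> q \<le> D x2" if q: "q \<in> walk_points ss" for q
  proof -
    obtain a b t where abt: "E a b" "0 \<le> t" "t \<le> 1" "q = pt a b t" "a \<noteq> y"
      using walk_points_on_edge[OF cyc q] pt_reorient_away[OF und] by metis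
    show ?thesis
    proof (cases "b = y")
      case True
      have "q \<noteq> Vert y"
        using q assms(4) by (auto simp: visited_def)
      then have "edge_depth a y q = t"
        using edge_depth_pt[of a b t y a] abt True by (simp add: edge_coord_def)
      moreover have "E y a"
        using und abt(1) True by (auto dest: undirectedD)
      ultimately have "t \<le> D a" "D a \<le> D x1"
        using depth_le q D_max by auto
      moreover have "2 * s = D x1 - D x2"
        by (simp add: s_def)
      ultimately have "(if a = x2 then t else max 0 (t - 2 * s)) \<le> D x2"
        using assms(10) by auto
      then show ?thesis
        using \<psi>_le[OF abt(1-3,5)] abt(4) True by simp
    qed (use \<psi>_le[OF abt(1-3,5)] abt(4) assms(10) in simp)
  qed
  then have "\<psi> (pt x2 y (1 - s)) \<le> D x2 + 1/2"
    using delta_tour_potential_bound[OF assms(1-3) \<psi>(1)] pt_in_Pts[of E x2 y "1 - s"] x2y(1) s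
    by simp
  then show ?thesis
    using \<psi>(2) by (simp add: s_def field_simps)
qed (use assms(10) in linarith)

lemma edge_len_add_le_incident_len:
  "x1 \<noteq> x2 \<Longrightarrow> edge_len x1 y s + edge_len x2 y s \<le> incident_len y s"
  by (cases s) (simp add: edge_len_def incident_len_def)

lemma unvisited_incident_len:
  assumes "simple_graph V E" "connected_graph V E" "min_degree_two V E"
    and "delta_tour E (1/2) ss" "y \<in> V" "y \<notin> visited ss"
  shows "2 \<le> sum_list (map (incident_len y) ss)"
proof -
  define D where "D x = (SOME D. 0 \<le> D \<and> 2 * D \<le> sum_list (map (edge_len x y) ss)
    \<and> (\<forall>q\<in>walk_points ss. edge_depth x y q \<le> D))" for x
  have D: "0 \<le> D x" "2 * D x \<le> sum_list (map (edge_len x y) ss)"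
    "\<And>q. q \<in> walk_points ss \<Longrightarrow> edge_depth x y q \<le> D x" if "E y x" for x
    using someI_ex[OF unvisited_neighbour_depth[OF assms(1-4,6) that]] unfolding D_def by blast+
  define N where "N = {x. E y x}"
  have "N \<subseteq> V"
    using assms(1) by (auto simp: N_def dest: simple_graph_edge_in_V)
  then have N: "finite N" "N \<noteq> {}"
    using assms(1) min_degree_two_other_neighbour[OF assms(3,5), of y]
    by (auto simp: N_def simple_graph_def intro: finite_subset)
  have "Max (D ` N) \<in> D ` N"
    using N by (intro Max_in) auto
  then obtain x1 where x1: "x1 \<in> N" "D x1 = Max (D ` N)"
    by (metis imageE)
  then have D_max: "D x \<le> D x1" if "E y x" for x
    using N that by (simp add: N_def)
  obtain x2 where x2: "E y x2" "x2 \<noteq> x1"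
    using min_degree_two_other_neighbour[OF assms(3,5)] by blast
  have "1 \<le> D x1 + D x2"
    using neighbour_depths_sum_ge_1[OF assms(1,2,4,6) _ x2 D(3) D_max D(1)[OF x2(1)]] x1(1)
    by (simp add: N_def)
  moreover have "sum_list (map (edge_len x1 y) ss) + sum_list (map (edge_len x2 y) ss)
      \<le> sum_list (map (incident_len y) ss)"
    using edge_len_add_le_incident_len[of x1 x2 y] x2(2)
    by (simp add: sum_list_mono flip: sum_list_addf)
  ultimately show ?thesis
    using D(2)[of x1] D(2)[OF x2(1)] x1(1) by (simp add: N_def)
qed

section \<open>From 1/2-tours to TSP-tours\<close>

definition inner_len :: "'a set \<Rightarrow> 'a step \<Rightarrow> real" where
  "inner_len W s = (case s of (u, v, l, m) \<Rightarrow> if u \<in> W \<and> v \<in> W then \<bar>l - m\<bar> else 0)"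

definition ends :: "'a::linorder step list \<Rightarrow> 'a set" where
  "ends ss = {v. Vert v \<in> step_end ` set ss}"

lemma ends_Cons: "ends (s # ss) = {v. step_end s = Vert v} \<union> ends ss"
  by (auto simp: ends_def)

lemma inner_len_nonneg: "0 \<le> inner_len W s"
  by (cases s) (simp add: inner_len_def)

lemma step_from_pt:
  assumes "undirected E" "valid_step E s" "step_start s = pt a b la" "E a b" "0 \<le> la" "la < 1"
  obtains c m where "E a c" "0 < la \<Longrightarrow> c = b" "0 \<le> m" "m \<le> 1" "step_end s = pt a c m"
    "inner_len W s = (if a \<in> W \<and> c \<in> W then \<bar>la - m\<bar> else 0)"
proof -
  obtain u v l m where s: "s = (u, v, l, m)"
    by (cases s)
  have uv: "E u v" "u \<noteq> v" "E v u" "0 \<le> l" "l \<le> 1" "0 \<le> m" "m \<le> 1"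
    using assms(1,2) by (auto simp: s valid_step_def dest: undirectedD)
  have start: "pt u v l = pt a b la"
    using assms(3) by (simp add: s step_start_def)
  have forward: "u = a \<and> l = la \<and> (0 < la \<longrightarrow> v = b) \<or> v = a \<and> l = 1 - la \<and> (0 < la \<longrightarrow> u = b)"
  proof (cases "la = 0")
    case True
    then show ?thesis
      using pt_eq_VertD[of u v l a] start uv(4,5) by auto
  next
    case False
    then show ?thesis
      using pt_eq_pt_interiorD[of a b u v la l] start assms(1,4,5,6) uv(2,4,5) by (auto dest: undirectedD)
  qed
  then show ?thesis
  proof (elim disjE conjE)
    assume "u = a" "l = la" "0 < la \<longrightarrow> v = b"
    then show ?thesis
      using that[of v m] uv by (simp add: s step_end_def inner_len_def)
  next
    assume "v = a" "l = 1 - la" "0 < la \<longrightarrow> u = b"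
    moreover have "pt u v m = pt v u (1 - m)"
      using pt_swap[OF uv(2)] by simp
    moreover have "\<bar>(1 - la) - m\<bar> = \<bar>la - (1 - m)\<bar>"
      by arith
    ultimately show ?thesis
      using that[of u "1 - m"] uv by (auto simp: s step_end_def inner_len_def)
  qed
qed

text \<open>Invariant: the walk is at \<open>pt a b la\<close>, the vertex walk at \<open>a\<close>, and the credit \<open>la\<close>
  pays for the return to \<open>a\<close> or the move to \<open>b\<close> when that edge lies inside \<open>W\<close>.\<close>

lemma discretize_walk:
  assumes "undirected E" "walk_from_to E ss (pt a b la) (Vert z)"
    and "E a b" "0 \<le> la" "la < 1" "a \<in> W" "ends ss \<subseteq> W"
  shows "\<exists>vs. vs \<noteq> [] \<and> hd vs = a \<and> last vs = z \<and> successively E vs \<and> set vs = insert a (ends ss)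
     \<and> real (length vs - 1) \<le> sum_list (map (inner_len W) ss) + (if b \<in> W then la else 0)"
  using assms(2-7)
proof (induction ss arbitrary: a b la)
  case Nil
  then have "la = 0 \<and> z = a"
    using pt_eq_VertD[of a b la z] by auto
  then show ?case
    by (intro exI[of _ "[a]"]) (auto simp: ends_def)
next
  case (Cons s rest)
  have s: "valid_step E s" "step_start s = pt a b la"
    and rest: "walk_from_to E rest (step_end s) (Vert z)" "ends rest \<subseteq> W"
    using Cons.prems(1,6) by (auto simp: walk_from_to_Cons ends_def)
  obtain c m where cm: "E a c" "0 < la \<Longrightarrow> c = b" "0 \<le> m" "m \<le> 1" "step_end s = pt a c m"
    and inner: "inner_len W s = (if a \<in> W \<and> c \<in> W then \<bar>la - m\<bar> else 0)"
    using step_from_pt[OF assms(1) s Cons.prems(2-4)] by blast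
  have credit: "0 \<le> (if b \<in> W then la else 0)"
    using Cons.prems(3) by simp
  show ?case
  proof (cases "m = 1")
    case True
    then have c: "step_end s = Vert c" "c \<in> W"
      using cm(5) Cons.prems(6) by (auto simp: ends_def)
    have "walk_from_to E rest (pt c a 0) (Vert z)" "E c a"
      using rest(1) c(1) cm(1) assms(1) by (auto dest: undirectedD)
    then obtain vs where vs: "vs \<noteq> []" "hd vs = c" "last vs = z" "successively E vs"
      "set vs = insert c (ends rest)" "real (length vs - 1) \<le> sum_list (map (inner_len W) rest)"
      using Cons.IH[OF _ _ order.refl zero_less_one c(2) rest(2)] by auto
    have "1 \<le> inner_len W s + (if b \<in> W then la else 0)"
      using inner cm(2) c(2) Cons.prems(3,5) True by (cases "0 < la") auto
    moreover have "real (length (a # vs) - 1) = real (length vs - 1) + 1"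
      using vs(1) by (cases vs) auto
    moreover have "sum_list (map (inner_len W) (s # rest)) = inner_len W s + sum_list (map (inner_len W) rest)"
      by simp
    ultimately have "real (length (a # vs) - 1) \<le>
        sum_list (map (inner_len W) (s # rest)) + (if b \<in> W then la else 0)"
      using vs(6) by linarith
    moreover have "set (a # vs) = insert a (ends (s # rest))"
      using vs(5) c(1) by (auto simp: ends_Cons)
    moreover have "successively E (a # vs)"
      using vs(1,2,4) cm(1) by (cases vs) (auto simp: successively_Cons)
    ultimately show ?thesis
      using vs(1,3) by (intro exI[of _ "a # vs"]) simp
  next
    case False
    have "walk_from_to E rest (pt a c m) (Vert z)" "m < 1"
      using rest(1) cm(4,5) False by auto
    then obtain vs where vs: "vs \<noteq> []" "hd vs = a" "last vs = z" "successively E vs"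
      "set vs = insert a (ends rest)"
      "real (length vs - 1) \<le> sum_list (map (inner_len W) rest) + (if c \<in> W then m else 0)"
      using Cons.IH[OF _ cm(1) cm(3) _ Cons.prems(5) rest(2)] by blast
    have "(if c \<in> W then m else 0) \<le> inner_len W s + (if b \<in> W then la else 0)"
      using inner cm(2) credit Cons.prems(5) inner_len_nonneg[of W s] by (cases "0 < la") auto
    moreover have "set vs = insert a (ends (s # rest))"
      using vs(5) cm(5) pt_eq_VertD[of a c m] cm(3,4) False by (auto simp: ends_Cons)
    ultimately show ?thesis
      using vs by (intro exI[of _ vs]) auto
  qed
qed

lemma cyclic_walk_step_start_in_ends:
  assumes "cyclic_walk E ss" "s \<in> set ss"
  shows "step_start s \<in> step_end ` set ss"
proof -
  let ?n = "length ss"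
  obtain k where k: "k < ?n" "s = ss ! k"
    using assms(2) by (auto simp: in_set_conv_nth)
  define j where "j = (k + ?n - 1) mod ?n"
  have n: "0 < ?n" "Suc (k + ?n - 1) = k + ?n"
    using k(1) by auto
  then have "j < ?n" "Suc j mod ?n = k"
    using k(1) by (simp_all add: j_def mod_Suc_eq)
  then show ?thesis
    using cyclic_walk_step_end[OF assms(1), of j] k(2) by (metis image_eqI nth_mem)
qed

lemma cyclic_walk_visited_eq_ends: "cyclic_walk E ss \<Longrightarrow> visited ss = ends ss"
  using visited_at_step_start cyclic_walk_step_start_in_ends step_end_in_cover step_cover_subset_walk_points
  by (fastforce simp: visited_def ends_def)

lemma half_tour_closed_vertex_walk:
  assumes "simple_graph V E" "connected_graph V E" "min_degree_two V E" "delta_tour E (1/2) ss"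
  obtains vs where "vs \<noteq> []" "hd vs = last vs" "successively E vs" "set vs = visited ss"
    "real (length vs - 1) \<le> sum_list (map (inner_len (visited ss)) ss)"
proof -
  have und: "undirected E"
    using assms(1) by (rule simple_graph_undirected)
  obtain v0 where "v0 \<in> V"
    using assms(2) by (auto simp: connected_graph_def)
  then obtain w0 where "E v0 w0"
    using min_degree_two_other_neighbour[OF assms(3)] by blast
  then obtain a b where ab: "E a b" "a \<in> visited ss"
    using half_tour_visits_edge[OF assms] und by (metis undirectedD(2))
  have cyc: "cyclic_walk E ss"
    using delta_tour_cyclic_walk[OF assms(4) ab(1)] .
  obtain k where k: "k < length ss" "step_start (ss ! k) = Vert a"
    using visited_at_step_start[OF cyc ab(2)] by (auto simp: in_set_conv_nth)
  define rs where "rs = rotate k ss"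
  have cyc_rs: "cyclic_walk E rs"
    using cyclic_walk_rotate[OF cyc] by (simp add: rs_def)
  have "ss \<noteq> []"
    using k(1) by auto
  then have "step_start (hd rs) = pt a b 0"
    using k by (simp add: rs_def hd_rotate_conv_nth)
  then have "walk_from_to E rs (pt a b 0) (Vert a)"
    using cyclic_walk_from_to[OF cyc_rs] by simp
  moreover have ends_rs: "ends rs = visited ss"
    using cyclic_walk_visited_eq_ends[OF cyc_rs] by (simp add: rs_def visited_def)
  ultimately obtain vs where "vs \<noteq> []" "hd vs = a" "last vs = a" "successively E vs"
    "set vs = insert a (ends rs)" "real (length vs - 1) \<le> sum_list (map (inner_len (visited ss)) rs)"
    using discretize_walk[OF und _ ab(1) order.refl zero_less_one ab(2), of rs a] by auto
  moreover have "insert a (ends rs) = visited ss"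
    using ends_rs ab(2) by auto
  ultimately show ?thesis
    using that[of vs] by (simp add: rs_def sum_list_map_rotate)
qed

lemma insert_detour:
  assumes "successively E vs" "vs \<noteq> []" "hd vs = last vs" "x \<in> set vs" "E x y" "E y x"
  shows "\<exists>vs'. successively E vs' \<and> vs' \<noteq> [] \<and> hd vs' = last vs' \<and> set vs' = insert y (set vs)
     \<and> length vs' = length vs + 2"
proof -
  obtain xs zs where vs: "vs = xs @ x # zs"
    using split_list[OF assms(4)] by blast
  define vs' where "vs' = xs @ x # y # x # zs"
  have "successively E vs'"
    using assms(1,5,6) unfolding vs vs'_def by (auto simp: successively_append_iff successively_Cons)
  moreover have "hd vs' = hd vs"
    unfolding vs'_def vs by (cases xs) simp_all
  moreover have "last vs' = last vs"
    unfolding vs'_def vs by (cases zs) simp_all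
  ultimately show ?thesis
    using assms(3) by (intro exI[of _ vs']) (auto simp: vs'_def vs)
qed

lemma add_detours:
  assumes "finite Y" "successively E vs" "vs \<noteq> []" "hd vs = last vs"
    and "\<And>y. y \<in> Y \<Longrightarrow> \<exists>x\<in>set vs. E x y \<and> E y x"
  shows "\<exists>vs'. successively E vs' \<and> vs' \<noteq> [] \<and> hd vs' = last vs' \<and> set vs' = set vs \<union> Y
     \<and> length vs' = length vs + 2 * card Y"
  using assms(1,5)
proof (induction Y rule: finite_induct)
  case (insert y Y)
  then obtain vs1 where vs1: "successively E vs1" "vs1 \<noteq> []" "hd vs1 = last vs1" "set vs1 = set vs \<union> Y"
    "length vs1 = length vs + 2 * card Y"
    by blast
  obtain x where "x \<in> set vs1" "E x y" "E y x"
    using insert.prems vs1(4) by blast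
  then show ?case
    using insert_detour[OF vs1(1-3)] vs1(4,5) insert.hyps by fastforce
qed (use assms in auto)

lemma step_len_split:
  assumes "finite Y" "Y \<inter> W = {}" "u \<in> W \<or> v \<in> W"
  shows "inner_len W (u, v, l, m) + (\<Sum>y\<in>Y. incident_len y (u, v, l, m)) \<le> step_len (u, v, l, m)"
proof -
  have "(\<Sum>y\<in>Y. incident_len y (u, v, l, m)) = (\<Sum>y\<in>Y. if y \<in> {u, v} then \<bar>l - m\<bar> else 0)"
    by (rule sum.cong) (auto simp: incident_len_def)
  also have "\<dots> = (\<Sum>y\<in>Y \<inter> {u, v}. \<bar>l - m\<bar>)"
    by (rule sum.inter_restrict[OF assms(1), symmetric])
  also have "\<dots> = real (card (Y \<inter> {u, v})) * \<bar>l - m\<bar>"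
    by simp
  finally have incident: "(\<Sum>y\<in>Y. incident_len y (u, v, l, m)) = real (card (Y \<inter> {u, v})) * \<bar>l - m\<bar>" .
  show ?thesis
  proof (cases "u \<in> W \<and> v \<in> W")
    case True
    then have "Y \<inter> {u, v} = {}"
      using assms(2) by auto
    then show ?thesis
      using True incident by (simp add: inner_len_def step_len_def)
  next
    case False
    then have "Y \<inter> {u, v} \<subseteq> {u} \<or> Y \<inter> {u, v} \<subseteq> {v}"
      using assms(2,3) by auto
    then have "card (Y \<inter> {u, v}) \<le> 1"
    proof (elim disjE)
      assume "Y \<inter> {u, v} \<subseteq> {u}"
      then show ?thesis
        using card_mono[of "{u}" "Y \<inter> {u, v}"] by simp
    next
      assume "Y \<inter> {u, v} \<subseteq> {v}"
      then show ?thesis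
        using card_mono[of "{v}" "Y \<inter> {u, v}"] by simp
    qed
    then have "real (card (Y \<inter> {u, v})) * \<bar>l - m\<bar> \<le> \<bar>l - m\<bar>"
      by (simp add: mult_left_le_one_le)
    moreover have "inner_len W (u, v, l, m) = 0"
      using False by (auto simp: inner_len_def)
    ultimately show ?thesis
      using incident by (simp add: step_len_def)
  qed
qed

lemma sum_sum_list_swap:
  "(\<Sum>y\<in>Y. sum_list (map (f y) xs)) = sum_list (map (\<lambda>x. \<Sum>y\<in>Y. f y x) xs)"
  by (induction xs) (simp_all add: sum.distrib)

lemma half_tour_length_split:
  assumes "simple_graph V E" "connected_graph V E" "min_degree_two V E" "delta_tour E (1/2) ss"
  shows "sum_list (map (inner_len (visited ss)) ss) + 2 * real (card (V - visited ss)) \<le> walk_length ss"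
proof -
  let ?W = "visited ss" and ?Y = "V - visited ss"
  have fin: "finite ?Y"
    using assms(1) by (simp add: simple_graph_def)
  have "(\<Sum>y\<in>?Y. 2) \<le> (\<Sum>y\<in>?Y. sum_list (map (incident_len y) ss))"
    using unvisited_incident_len[OF assms] by (intro sum_mono) auto
  also have "\<dots> = sum_list (map (\<lambda>s. \<Sum>y\<in>?Y. incident_len y s) ss)"
    by (rule sum_sum_list_swap)
  finally have "2 * real (card ?Y) \<le> sum_list (map (\<lambda>s. \<Sum>y\<in>?Y. incident_len y s) ss)"
    by simp
  moreover have "inner_len ?W s + (\<Sum>y\<in>?Y. incident_len y s) \<le> step_len s" if "s \<in> set ss" for s
  proof -
    obtain u v l m where s: "s = (u, v, l, m)"
      by (cases s)
    have "valid_step E s"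
      using that assms(4) by (auto simp: delta_tour_def is_tour_def is_walk_def)
    then have "E u v"
      by (simp add: s valid_step_def)
    then have "u \<in> ?W \<or> v \<in> ?W"
      using half_tour_visits_edge[OF assms] by blast
    then show ?thesis
      using step_len_split[OF fin, of ?W u v l m] s by auto
  qed
  then have "sum_list (map (\<lambda>s. inner_len ?W s + (\<Sum>y\<in>?Y. incident_len y s)) ss) \<le> walk_length ss"
    unfolding walk_length_def by (rule sum_list_mono)
  ultimately show ?thesis
    by (simp add: sum_list_addf)
qed

lemma half_tour_imp_tsp_tour:
  assumes "simple_graph V E" "connected_graph V E" "min_degree_two V E"
    and "delta_tour E (1/2) ss" "walk_length ss = K"
  shows "\<exists>vs. tsp_tour V E vs \<and> real (tsp_length vs) \<le> K"
proof -
  have und: "undirected E"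
    using assms(1) by (rule simple_graph_undirected)
  obtain vs0 where vs0: "vs0 \<noteq> []" "hd vs0 = last vs0" "successively E vs0" "set vs0 = visited ss"
    "real (length vs0 - 1) \<le> sum_list (map (inner_len (visited ss)) ss)"
    using half_tour_closed_vertex_walk[OF assms(1-4)] by blast
  have fin: "finite (V - visited ss)"
    using assms(1) by (simp add: simple_graph_def)
  have neighbour: "\<exists>x\<in>set vs0. E x y \<and> E y x" if y: "y \<in> V - visited ss" for y
  proof -
    obtain x where "E y x"
      using min_degree_two_other_neighbour[OF assms(3)] y by blast
    then show ?thesis
      using half_tour_visits_edge[OF assms(1-4)] y vs0(4) und by (blast dest: undirectedD)
  qed
  obtain vs where vs: "successively E vs" "vs \<noteq> []" "hd vs = last vs"
    "set vs = set vs0 \<union> (V - visited ss)" "length vs = length vs0 + 2 * card (V - visited ss)"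
    using add_detours[OF fin vs0(3,1,2) neighbour] by blast
  then have "tsp_tour V E vs"
    using vs0(4) by (auto simp: tsp_tour_def successively_conv_nth)
  moreover have "real (tsp_length vs) = real (length vs0 - 1) + 2 * real (card (V - visited ss))"
    using vs(5) vs0(1) by (cases vs0) (auto simp: tsp_length_def)
  ultimately show ?thesis
    using half_tour_length_split[OF assms(1-4)] vs0(5) assms(5) by (intro exI[of _ vs]) linarith
qed

theorem mainTheorem15:
  fixes V :: "'a::linorder set" and E :: "'a \<Rightarrow> 'a \<Rightarrow> bool" and K :: real
  assumes "simple_graph V E" and "connected_graph V E" and "cubic V E" and "bipartite V E"
  shows "(\<exists>vs. tsp_tour V E vs \<and> real (tsp_length vs) \<le> K)
     \<longleftrightarrow> (\<exists>ss. delta_tour E (1/2) ss \<and> walk_length ss = K)"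
proof
  have deg: "min_degree_two V E"
    using assms(3) by (rule cubic_min_degree_two)
  show "\<exists>ss. delta_tour E (1/2) ss \<and> walk_length ss = K"
    if "\<exists>vs. tsp_tour V E vs \<and> real (tsp_length vs) \<le> K"
  proof -
    obtain v w where "v \<in> V" "E v w"
      using assms(2) min_degree_two_other_neighbour[OF deg] by (fastforce simp: connected_graph_def)
    then show ?thesis
      using that tsp_tour_imp_half_tour[OF assms(1)] by blast
  qed
  show "\<exists>vs. tsp_tour V E vs \<and> real (tsp_length vs) \<le> K"
    if "\<exists>ss. delta_tour E (1/2) ss \<and> walk_length ss = K"
    using that half_tour_imp_tsp_tour[OF assms(1,2) deg] by blast
qed

end
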